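(* Let $m\ge2$, $k\ge1$ be integers, $\alpha\in(1,m^{1/k})$, $\tau>0$, and $\Theta\sim U[0,1]$. Then: (1) $\mathbb{E}_\Theta[\mathcal{R}^\alpha_{m,k,\Theta}(t)]=\frac{k}{\ln m}\left(\alpha+\frac{m^{1/k}}{\alpha}-2\right)t$ for every $t>0$; (2) $\mathbb{E}_\Theta\!\left[\frac{1}{\mathcal{R}^\alpha_{m,k,\Theta}(t)}\right]=\frac{k}{\ln m}\left(2-\frac1\alpha-\frac{\alpha}{m^{1/k}}\right)\frac1t$ for every $t>0$; (3) $\mathbb{E}_\Theta[\mathcal{D}^\alpha_{m,k,\Theta}]=\frac{k}{\ln m}\left(\left(1-\frac{\alpha}{m^{1/k}}\right)\Sigma^{\alpha,\mathrm{prim}}_{m,k}+\left(1-\frac1\alpha\right)\Sigma^{\alpha,\mathrm{sec}}_{m,k}\right)\frac1\tau$.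
   Context: Primary grid $\mathcal{G}_{m,k}=\{m^{p/k}\tau:p\in\mathbb{Z}\}$, secondary grid $\mathcal{G}^\alpha_{m,k}=\{\alpha m^{p/k}\tau:p\in\mathbb{Z}\}$; for $\theta\in[0,1]$ the shifted interleaved grid is $\mathcal{H}^\alpha_{m,k,\theta}=\{m^{\theta/k}g:g\in\mathcal{G}_{m,k}\cup\mathcal{G}^\alpha_{m,k}\}$, and $\mathcal{R}^\alpha_{m,k,\theta}(t)=\min\{g\in\mathcal{H}^\alpha_{m,k,\theta}:g>t\}$ for $t>0$. For $g>0$, $\Delta\ge0$, $\mathcal{M}_{g,\Delta}=\{0,g,\dots,\lfloor\Delta/g\rfloor g\}$. Density coefficient: $\mathcal{D}^\alpha_{m,k,\theta}=\lim_{\Delta\to\infty}\frac1\Delta\big|\bigcup_{g\in\mathcal{H}^\alpha_{m,k,\theta}\cap[\mathcal{R}^\alpha_{m,k,\theta}(\tau),\infty)}\mathcal{M}_{g,\Delta}\big|$. For a finite $\mathcal{N}\subseteq\mathbb{R}_{>0}$, $\mathrm{LCM}(\mathcal{N})$ is the smallest positive real that is an integer multiple of every element of $\mathcal{N}$, or $\infty$ if none exists; $1/\infty=0$. Let $\mathcal{S}^{\alpha,\mathrm{prim}}_{m,k}=\{m^{(\kappa-1)/k}\}_{\kappa\in[k]}\cup\{\alpha m^{(\kappa-1)/k}\}_{\kappa\in[k]}$, $\mathcal{S}^{\alpha,\mathrm{sec}}_{m,k}=\{m^{(\kappa-1)/k}\}_{\kappa\in[k]}\cup\{\frac1\alpha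 m^{\kappa/k}\}_{\kappa\in[k]}$, and $\Sigma^{\alpha,\mathrm{prim}}_{m,k}=\sum_{\emptyset\ne\mathcal{N}\subseteq\mathcal{S}^{\alpha,\mathrm{prim}}_{m,k}}\frac{(-1)^{|\mathcal{N}|+1}}{\mathrm{LCM}(\mathcal{N})}$, $\Sigma^{\alpha,\mathrm{sec}}_{m,k}=\sum_{\emptyset\ne\mathcal{N}\subseteq\mathcal{S}^{\alpha,\mathrm{sec}}_{m,k}}\frac{(-1)^{|\mathcal{N}|+1}}{\mathrm{LCM}(\mathcal{N})}$. *)

theory Defs
  imports "HOL-Analysis.Analysis"
begin

definition prim_grid :: "nat \<Rightarrow> nat \<Rightarrow> real \<Rightarrow> real set" where
  "prim_grid m k \<tau> = {real m powr (real_of_int p / real k) * \<tau> | p :: int. True}"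

definition sec_grid :: "nat \<Rightarrow> nat \<Rightarrow> real \<Rightarrow> real \<Rightarrow> real set" where
  "sec_grid m k \<alpha> \<tau> = {\<alpha> * real m powr (real_of_int p / real k) * \<tau> | p :: int. True}"

definition shifted_grid :: "nat \<Rightarrow> nat \<Rightarrow> real \<Rightarrow> real \<Rightarrow> real \<Rightarrow> real set" where
  "shifted_grid m k \<alpha> \<theta> \<tau> =
     {real m powr (\<theta> / real k) * g | g. g \<in> prim_grid m k \<tau> \<union> sec_grid m k \<alpha> \<tau>}"

definition next_grid :: "nat \<Rightarrow> nat \<Rightarrow> real \<Rightarrow> real \<Rightarrow> real \<Rightarrow> real \<Rightarrow> real" where
  "next_grid m k \<alpha> \<theta> \<tau> t = (LEAST g. g \<in> shifted_grid m k \<alpha> \<theta> \<tau> \<and> g > t)"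

definition mult_set :: "real \<Rightarrow> real \<Rightarrow> real set" where
  "mult_set g \<Delta> = {real j * g | j :: nat. int j \<le> \<lfloor>\<Delta> / g\<rfloor>}"

definition density_coeff :: "nat \<Rightarrow> nat \<Rightarrow> real \<Rightarrow> real \<Rightarrow> real \<Rightarrow> real" where
  "density_coeff m k \<alpha> \<theta> \<tau> =
     Lim at_top (\<lambda>\<Delta>. real (card (\<Union>g \<in> shifted_grid m k \<alpha> \<theta> \<tau> \<inter> {next_grid m k \<alpha> \<theta> \<tau> \<tau>..}.
                                       mult_set g \<Delta>)) / \<Delta>)"

definition real_common_multiple :: "real set \<Rightarrow> real \<Rightarrow> bool" where
  "real_common_multiple N L \<longleftrightarrow> L > 0 \<and> (\<forall>x \<in> N. \<exists>n :: int. L = real_of_int n * x)"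

definition real_LCM :: "real set \<Rightarrow> ereal" where
  "real_LCM N = (if \<exists>L. real_common_multiple N L
                 then ereal (LEAST L. real_common_multiple N L) else \<infinity>)"

definition inv_LCM :: "real set \<Rightarrow> real" where
  "inv_LCM N = (case real_LCM N of ereal L \<Rightarrow> 1 / L | _ \<Rightarrow> 0)"

definition S_prim :: "nat \<Rightarrow> nat \<Rightarrow> real \<Rightarrow> real set" where
  "S_prim m k \<alpha> = (\<lambda>\<kappa>. real m powr ((real \<kappa> - 1) / real k)) ` {1..k}
                 \<union> (\<lambda>\<kappa>. \<alpha> * real m powr ((real \<kappa> - 1) / real k)) ` {1..k}"

definition S_sec :: "nat \<Rightarrow> nat \<Rightarrow> real \<Rightarrow> real set" where
  "S_sec m k \<alpha> = (\<lambda>\<kappa>. real m powr ((real \<kappa> - 1) / real k)) ` {1..k}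
                 \<union> (\<lambda>\<kappa>. (1 / \<alpha>) * real m powr (real \<kappa> / real k)) ` {1..k}"

definition incl_excl_sum :: "real set \<Rightarrow> real" where
  "incl_excl_sum S = (\<Sum>N | N \<subseteq> S \<and> N \<noteq> {}. (-1) ^ (card N + 1) * inv_LCM N)"

definition Sigma_prim :: "nat \<Rightarrow> nat \<Rightarrow> real \<Rightarrow> real" where
  "Sigma_prim m k \<alpha> = incl_excl_sum (S_prim m k \<alpha>)"

definition Sigma_sec :: "nat \<Rightarrow> nat \<Rightarrow> real \<Rightarrow> real" where
  "Sigma_sec m k \<alpha> = incl_excl_sum (S_sec m k \<alpha>)"

definition E_unif :: "(real \<Rightarrow> real) \<Rightarrow> real" where
  "E_unif f = integral\<^sup>L (uniform_measure lborel {0..1}) f"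

end

theory Submission
  imports Defs "HOL-Library.Periodic_Fun"
begin

(* Write grid points as \<tau> m^(x/k). In the exponent x the grid is \<theta> + (\<int> \<union> (b + \<int>)), where
   \<alpha> = m^(b/k) and 0 < b < 1, so R(t) = t m^(\<psi>(u - \<theta>)/k) with u the exponent of t and \<psi>(y) the
   gap from y to the next point of \<int> \<union> (b + \<int>). As \<psi> is 1-periodic, averaging over \<theta> amounts
   to averaging over one period, on which \<psi> is b - y on [0,b) and 1 - y on [b,1); this gives (1)
   and (2).
   For (3), let g0 be the first grid point above \<tau>. Every grid point \<ge> g0 is m^q g0 s for some
   q \<ge> 0 and s in S_prim if g0 is primary, in S_sec if it is secondary (S_sec is S_prim for the
   ratio m^(1/k)/\<alpha>). So only the multiples of the 2k points g0 s matter; by inclusion-exclusion,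
   and because the common multiples of a finite set are the multiples of its LCM, they have
   density \<Sigma>/g0. Averaging 1/g0 over \<theta> is again an integral of the same periodic kind. *)

lemma E_unif_eq_integral:
  fixes f :: "real \<Rightarrow> real"
  assumes f[measurable]: "f \<in> borel_measurable borel"
    and bound: "\<And>x. x \<in> {0..1} \<Longrightarrow> \<bar>f x\<bar> \<le> B"
    and I: "(f has_integral I) {0..1}"
  shows "E_unif f = I"
proof -
  have U: "uniform_measure lborel {0..1::real} = density lborel (\<lambda>x. ennreal (indicator {0..1} x))"
    unfolding uniform_measure_def by (simp add: ennreal_indicator divide_ennreal_def)
  interpret finite_measure "uniform_measure lborel {0..1::real}"
    by (rule finite_measureI) (simp add: emeasure_uniform_measure)
  have "integrable (uniform_measure lborel {0..1::real}) f"
    by (rule integrable_const_bound[of _ B]) (auto simp: AE_uniform_measure bound)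
  then have "set_integrable lborel {0..1::real} f"
    unfolding U set_integrable_def by (subst (asm) integrable_density) auto
  moreover have "E_unif f = set_lebesgue_integral lborel {0..1::real} f"
    unfolding E_unif_def U set_lebesgue_integral_def by (subst integral_density) auto
  ultimately show ?thesis
    using integral_unique[OF I] by (simp add: set_borel_integral_eq_integral(2))
qed

lemma has_integral_periodic_translate:
  fixes \<phi> :: "real \<Rightarrow> real"
  assumes per: "\<And>y. \<phi> (y + 1) = \<phi> y" and I: "(\<phi> has_integral I) {0..1}"
  shows "(\<phi> has_integral I) {a..a + 1}"
proof -
  interpret periodic_fun_simple' \<phi> by standard (rule per)
  define v where "v = frac a"
  have v: "0 \<le> v" "v < 1" by (simp_all add: v_def frac_lt_1)
  have shift_int: "\<phi> \<circ> (+) (of_int n) = \<phi>" for n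
    by (auto simp: add.commute plus_of_int)
  have "(\<phi> has_integral integral {0..v} \<phi>) {0 + 1..v + 1}"
    using integrable_subinterval_real[OF has_integral_integrable[OF I], of 0 v] v
    by (subst has_integral_shift_Icc_real[symmetric]) (auto simp: shift_int[of 1, simplified])
  moreover have "(\<phi> has_integral integral {v..1} \<phi>) {v..1}"
    using integrable_subinterval_real[OF has_integral_integrable[OF I], of v 1] v by auto
  moreover have "integral {0..v} \<phi> + integral {v..1} \<phi> = I"
    using Henstock_Kurzweil_Integration.integral_combine[OF v(1) less_imp_le[OF v(2)]
        has_integral_integrable[OF I]] I
    by (simp add: integral_unique)
  ultimately have "(\<phi> has_integral I) {v..v + 1}"
    using has_integral_combine[of v 1 "v + 1"] v
    by (metis add.commute add_0 le_add_same_cancel2 less_imp_le)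
  then have "((\<phi> \<circ> (+) (of_int \<lfloor>a\<rfloor>)) has_integral I) {v..v + 1}"
    by (simp only: shift_int)
  then show ?thesis
    by (simp add: has_integral_shift_Icc_real v_def frac_def)
qed

lemma has_integral_periodic_reflect:
  fixes \<phi> :: "real \<Rightarrow> real"
  assumes "\<And>y. \<phi> (y + 1) = \<phi> y" and "(\<phi> has_integral I) {0..1}"
  shows "((\<lambda>\<theta>. \<phi> (u - \<theta>)) has_integral I) {0..1}"
proof -
  have "(\<phi> has_integral I) {-1 + u..0 + u}"
    using has_integral_periodic_translate[OF assms, of "u - 1"] by simp
  then have "((\<lambda>y. (\<phi> \<circ> (+) u) (- y)) has_integral I) {-0..-(-1)}"
    by (simp only: has_integral_reflect_real has_integral_shift_Icc_real)
  then show ?thesis by simp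
qed

lemma has_integral_exp_affine:
  fixes c :: real
  assumes "c \<noteq> 0" "a \<le> e"
  shows "((\<lambda>y. exp (c * (d - y))) has_integral (exp (c * (d - a)) - exp (c * (d - e))) / c) {a..e}"
proof -
  have "((\<lambda>y. exp (c * (d - y)))
      has_integral (- exp (c * (d - e)) / c) - (- exp (c * (d - a)) / c)) {a..e}"
  proof (rule fundamental_theorem_of_calculus[OF assms(2)])
    fix x assume "x \<in> {a..e}"
    show "((\<lambda>y. - exp (c * (d - y)) / c) has_vector_derivative exp (c * (d - x)))
        (at x within {a..e})"
      unfolding has_real_derivative_iff_has_vector_derivative[symmetric]
      using assms(1) by (auto intro!: derivative_eq_intros)
  qed
  then show ?thesis by (simp add: diff_divide_distrib)
qed

definition interleaved_ints :: "real \<Rightarrow> real set" where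
  "interleaved_ints b = {x. x \<in> \<int> \<or> x - b \<in> \<int>}"

(* For 0 \<le> b < 1, the least point of interleaved_ints b above y; R in exponent coordinates. *)
definition next_above :: "real \<Rightarrow> real \<Rightarrow> real" where
  "next_above b y = of_int \<lfloor>y\<rfloor> + (if b \<le> frac y then 1 else b)"

lemma interleaved_ints_add_int:
  assumes "n \<in> \<int>"
  shows "x + n \<in> interleaved_ints b \<longleftrightarrow> x \<in> interleaved_ints b"
proof -
  have "x + n - b = (x - b) + n" by simp
  then show ?thesis
    unfolding interleaved_ints_def mem_Collect_eq by (simp only: add_in_Ints_iff_right[OF assms])
qed

lemma next_above_mem: "next_above b y \<in> interleaved_ints b"
  unfolding interleaved_ints_def next_above_def by simp

lemma less_next_above: "b < 1 \<Longrightarrow> y < next_above b y"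
  unfolding next_above_def frac_def by (simp add: real_of_int_floor_add_one_gt)

lemma next_above_le:
  assumes b: "0 \<le> b" "b < 1" and e: "e \<in> interleaved_ints b" "y < e"
  shows "next_above b y \<le> e"
proof -
  have fr: "0 \<le> frac y" "y = of_int \<lfloor>y\<rfloor> + frac y"
    by (simp_all add: frac_def)
  consider n where "e = of_int n" | n where "e = b + of_int n"
    using e(1) unfolding interleaved_ints_def by (auto elim!: Ints_cases simp: diff_eq_eq)
  then show ?thesis
  proof cases
    case 1
    then have "\<lfloor>y\<rfloor> < n" using e(2) by (simp add: floor_less_iff)
    then show ?thesis using 1 b unfolding next_above_def int_less_real_le by auto
  next
    case 2
    show ?thesis
    proof (cases "b \<le> frac y")
      case True
      then have "of_int \<lfloor>y\<rfloor> < real_of_int n" using e(2) 2 fr by linarith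
      then show ?thesis
        using 2 True b unfolding next_above_def of_int_less_iff int_less_real_le by simp
    next
      case False
      have "\<lfloor>y\<rfloor> \<le> n" using e(2) 2 b by (simp add: floor_le_iff)
      then show ?thesis using 2 False unfolding next_above_def by simp
    qed
  qed
qed

lemma next_above_le_add_1: "b \<le> 1 \<Longrightarrow> next_above b y \<le> y + 1"
  using of_int_floor_le[of y] unfolding next_above_def by (smt (verit))

lemma next_above_add_1: "next_above b (y + 1) = next_above b y + 1"
  by (simp add: next_above_def frac_1_eq)

lemma next_above_unit_interval:
  "0 \<le> y \<Longrightarrow> y < 1 \<Longrightarrow> next_above b y = (if b \<le> y then 1 else b)"
  by (simp add: next_above_def frac_eq floor_eq_iff)

lemma interleaved_ints_translate:
  "(\<lambda>x. x - next_above b y) ` interleaved_ints b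
     = interleaved_ints (if b \<le> frac y then b else 1 - b)"
proof -
  have "z + next_above b y \<in> interleaved_ints b
      \<longleftrightarrow> z \<in> interleaved_ints (if b \<le> frac y then b else 1 - b)" for z
  proof (cases "b \<le> frac y")
    case True
    then have "z + next_above b y = z + of_int (\<lfloor>y\<rfloor> + 1)"
      "z + next_above b y - b = (z - b) + of_int (\<lfloor>y\<rfloor> + 1)"
      by (simp_all add: next_above_def)
    then show ?thesis using True unfolding interleaved_ints_def mem_Collect_eq
      by (simp only: add_in_Ints_iff_right[OF Ints_of_int]) simp
  next
    case False
    then have "z + next_above b y = (z - (1 - b)) + of_int (\<lfloor>y\<rfloor> + 1)"
      "z + next_above b y - b = z + of_int \<lfloor>y\<rfloor>"
      by (simp_all add: next_above_def)
    then show ?thesis using False unfolding interleaved_ints_def mem_Collect_eq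
      by (simp only: add_in_Ints_iff_right[OF Ints_of_int]) auto
  qed
  moreover have "(\<lambda>x. x - a) ` A = {z. z + a \<in> A}" for a and A :: "real set"
    by force
  ultimately show ?thesis by auto
qed

(* The weights P, Q distinguish whether the next point lies in \<int> or in b + \<int>. *)
lemma has_integral_exp_next_above:
  assumes b: "0 < b" "b < 1" and c: "c \<noteq> 0"
  shows "((\<lambda>y. (if b \<le> frac y then P else Q) * exp (c * (next_above b y - y))) has_integral
           (P * (exp (c * (1 - b)) - 1) + Q * (exp (c * b) - 1)) / c) {0..1}"
proof -
  have exp_low: "((\<lambda>y. Q * exp (c * (b - y))) has_integral Q * ((exp (c * b) - 1) / c)) {0..b}"
    using has_integral_mult_right[OF has_integral_exp_affine[OF c, of 0 b b]] b by simp
  have low: "((\<lambda>y. (if b \<le> frac y then P else Q) * exp (c * (next_above b y - y)))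
      has_integral Q * ((exp (c * b) - 1) / c)) {0..b}"
    by (rule has_integral_spike_finite[of "{b}", OF _ _ exp_low])
      (use b in \<open>auto simp: next_above_unit_interval frac_eq\<close>)
  have exp_high:
    "((\<lambda>y. P * exp (c * (1 - y))) has_integral P * ((exp (c * (1 - b)) - 1) / c)) {b..1}"
    using has_integral_mult_right[OF has_integral_exp_affine[OF c, of b 1 1]] b by simp
  have high: "((\<lambda>y. (if b \<le> frac y then P else Q) * exp (c * (next_above b y - y)))
      has_integral P * ((exp (c * (1 - b)) - 1) / c)) {b..1}"
    by (rule has_integral_spike_finite[of "{1}", OF _ _ exp_high])
      (use b in \<open>auto simp: next_above_unit_interval frac_eq\<close>)
  show ?thesis
    using has_integral_combine[OF _ _ low high] b by (simp add: add_divide_distrib add.commute)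
qed

lemma E_unif_exp_next_above:
  assumes b: "0 < b" "b < 1" and c: "c \<noteq> 0"
  shows "E_unif (\<lambda>\<theta>. (if b \<le> frac (u - \<theta>) then P else Q)
                     * exp (c * (next_above b (u - \<theta>) - (u - \<theta>))))
       = (P * (exp (c * (1 - b)) - 1) + Q * (exp (c * b) - 1)) / c"
proof (rule E_unif_eq_integral)
  define \<phi> where "\<phi> y = (if b \<le> frac y then P else Q) * exp (c * (next_above b y - y))" for y
  have "\<phi> (y + 1) = \<phi> y" for y
    by (simp add: \<phi>_def next_above_add_1 frac_1_eq)
  moreover have "(\<phi> has_integral (P * (exp (c * (1 - b)) - 1) + Q * (exp (c * b) - 1)) / c) {0..1}"
    unfolding \<phi>_def by (rule has_integral_exp_next_above[OF b c])
  ultimately show "((\<lambda>\<theta>. \<phi> (u - \<theta>))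
      has_integral (P * (exp (c * (1 - b)) - 1) + Q * (exp (c * b) - 1)) / c) {0..1}"
    unfolding \<phi>_def by (rule has_integral_periodic_reflect)
  have gap: "0 < next_above b y - y" "next_above b y - y \<le> 1" for y
    using less_next_above[OF b(2), of y] next_above_le_add_1[of b y] b by auto
  have "c * (next_above b y - y) \<le> \<bar>c\<bar>" for y
  proof -
    have "c * (next_above b y - y) \<le> \<bar>c\<bar> * (next_above b y - y)"
      using gap[of y] by (intro mult_right_mono) auto
    also have "\<dots> \<le> \<bar>c\<bar>"
      using gap[of y] by (intro mult_left_le) auto
    finally show ?thesis .
  qed
  then have "\<bar>\<phi> y\<bar> \<le> (\<bar>P\<bar> + \<bar>Q\<bar>) * exp \<bar>c\<bar>" for y
    unfolding \<phi>_def abs_mult by (intro mult_mono) auto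
  then show "\<bar>\<phi> (u - \<theta>)\<bar> \<le> (\<bar>P\<bar> + \<bar>Q\<bar>) * exp \<bar>c\<bar>" for \<theta> .
  show "(\<lambda>\<theta>. \<phi> (u - \<theta>)) \<in> borel_measurable borel"
    unfolding \<phi>_def next_above_def frac_def by measurable
qed

lemma mult_set_eq:
  assumes g: "g > 0" and \<Delta>: "\<Delta> \<ge> 0"
  shows "mult_set g \<Delta> = {z. 0 \<le> z \<and> z \<le> \<Delta> \<and> (\<exists>n::int. z = of_int n * g)}"
proof safe
  fix z assume "z \<in> mult_set g \<Delta>"
  then obtain j :: nat where z: "z = real j * g" "int j \<le> \<lfloor>\<Delta> / g\<rfloor>"
    unfolding mult_set_def by blast
  have "real j \<le> \<Delta> / g" using z(2) by (metis le_floor_iff of_int_of_nat_eq)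
  then show "0 \<le> z" "z \<le> \<Delta>" using g z(1) by (simp_all add: field_simps)
  show "\<exists>n::int. z = of_int n * g" using z(1) by (intro exI[of _ "int j"]) simp
next
  fix n :: int assume "0 \<le> of_int n * g" "of_int n * g \<le> \<Delta>"
  then have "n \<ge> 0" "of_int n \<le> \<Delta> / g" using g by (simp_all add: field_simps zero_le_mult_iff)
  then show "of_int n * g \<in> mult_set g \<Delta>" unfolding mult_set_def
    by (intro CollectI exI[of _ "nat n"]) (simp add: le_floor_iff)
qed

lemma mult_set_image:
  assumes "g > 0" "\<Delta> \<ge> 0"
  shows "mult_set g \<Delta> = (\<lambda>j. real j * g) ` {0..nat \<lfloor>\<Delta> / g\<rfloor>}"
  using assms unfolding mult_set_def by (auto simp: image_iff le_nat_iff)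

lemma finite_mult_set: "g > 0 \<Longrightarrow> \<Delta> \<ge> 0 \<Longrightarrow> finite (mult_set g \<Delta>)"
  by (simp add: mult_set_image)

lemma card_mult_set:
  assumes g: "g > 0" and \<Delta>: "\<Delta> \<ge> 0"
  shows "real (card (mult_set g \<Delta>)) = of_int \<lfloor>\<Delta> / g\<rfloor> + 1"
proof -
  have "inj_on (\<lambda>j. real j * g) {0..nat \<lfloor>\<Delta> / g\<rfloor>}" using g by (auto simp: inj_on_def)
  then have "card (mult_set g \<Delta>) = nat \<lfloor>\<Delta> / g\<rfloor> + 1"
    by (simp add: mult_set_image[OF g \<Delta>] card_image)
  then show ?thesis using g \<Delta> by simp
qed

lemma mult_set_mult_subset:
  assumes "g > 0" "\<Delta> \<ge> 0" "n \<ge> 1"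
  shows "mult_set (real n * g) \<Delta> \<subseteq> mult_set g \<Delta>"
  using assms by (auto simp: mult_set_eq intro!: exI[of _ "_ * int n"])

lemma tendsto_card_mult_set:
  assumes g: "g > 0"
  shows "((\<lambda>\<Delta>. real (card (mult_set g \<Delta>)) / \<Delta>) \<longlongrightarrow> 1 / g) at_top"
proof (rule tendsto_sandwich[of "\<lambda>_. 1 / g" _ _ "\<lambda>\<Delta>. 1 / g + 1 / \<Delta>"])
  have card: "\<Delta> / g \<le> real (card (mult_set g \<Delta>))" "real (card (mult_set g \<Delta>)) \<le> \<Delta> / g + 1"
    if "\<Delta> > 0" for \<Delta>
    using that g by (simp_all add: card_mult_set)
  show "\<forall>\<^sub>F \<Delta> in at_top. 1 / g \<le> real (card (mult_set g \<Delta>)) / \<Delta>"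
    using eventually_gt_at_top[of 0]
    by eventually_elim (use card(1) g in \<open>simp add: field_simps\<close>)
  show "\<forall>\<^sub>F \<Delta> in at_top. real (card (mult_set g \<Delta>)) / \<Delta> \<le> 1 / g + 1 / \<Delta>"
    using eventually_gt_at_top[of 0]
    by eventually_elim (use card(2) g in \<open>simp add: field_simps\<close>)
  show "((\<lambda>\<Delta>. 1 / g + 1 / \<Delta>) \<longlongrightarrow> 1 / g) at_top"
    using tendsto_add[OF tendsto_const tendsto_inverse_0_at_top[OF filterlim_ident], of "1 / g"]
    by (simp add: inverse_eq_divide)
qed simp

definition common_multiples :: "real set \<Rightarrow> real set" where
  "common_multiples N = {z. \<forall>x\<in>N. \<exists>n::int. z = of_int n * x}"

lemma real_common_multiple_iff:
  "real_common_multiple N L \<longleftrightarrow> L > 0 \<and> L \<in> common_multiples N"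
  unfolding real_common_multiple_def common_multiples_def by auto

lemma common_multiples_diff_mult:
  assumes "z \<in> common_multiples N" "w \<in> common_multiples N"
  shows "z - of_int j * w \<in> common_multiples N"
proof -
  have "\<exists>n::int. z - of_int j * w = of_int n * x" if x: "x \<in> N" for x
  proof -
    obtain n n' :: int where "z = of_int n * x" "w = of_int n' * x"
      using assms x unfolding common_multiples_def by blast
    then show ?thesis by (intro exI[of _ "n - j * n'"]) (simp add: algebra_simps)
  qed
  then show ?thesis unfolding common_multiples_def by blast
qed

lemma real_LCM_least:
  assumes x0: "x0 \<in> N" "x0 > 0" and L: "real_common_multiple N L"
  obtains L0 where "real_common_multiple N L0" "real_LCM N = ereal L0"
    "\<And>L. real_common_multiple N L \<Longrightarrow> L0 \<le> L"
proof -
  \<comment> \<open>every positive common multiple is a natural multiple of \<open>x0\<close>, so a least one exists\<close>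
  have nat_mult: "\<exists>n::nat. L = real n * x0" if L_cm: "real_common_multiple N L" for L
  proof -
    obtain n :: int where n: "L = of_int n * x0" "L > 0"
      using L_cm x0(1) unfolding real_common_multiple_def by blast
    then have "n > 0" using x0(2) by (simp add: zero_less_mult_iff)
    then show ?thesis using n by (intro exI[of _ "nat n"]) simp
  qed
  define n0 where "n0 = (LEAST n. real_common_multiple N (real n * x0))"
  define L0 where "L0 = real n0 * x0"
  obtain n where "L = real n * x0" using nat_mult[OF L] by blast
  then have "real_common_multiple N (real n * x0)" using L by simp
  then have L0: "real_common_multiple N L0" unfolding L0_def n0_def
    by (rule LeastI[where P = "\<lambda>n. real_common_multiple N (real n * x0)"])
  have least: "L0 \<le> L" if L_cm: "real_common_multiple N L" for L
  proof -
    obtain n where n: "L = real n * x0" using nat_mult[OF L_cm] by blast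
    have "n0 \<le> n" unfolding n0_def by (rule Least_le) (use L_cm n in simp)
    then show ?thesis using x0(2) unfolding L0_def n by (intro mult_right_mono) auto
  qed
  have "(LEAST L. real_common_multiple N L) = L0"
    by (rule Least_equality) (use L0 least in auto)
  then have "real_LCM N = ereal L0" unfolding real_LCM_def using L0 by auto
  with L0 least that show ?thesis by blast
qed

lemma common_multiples_eq_multiples:
  assumes L0: "real_common_multiple N L0"
    and least: "\<And>L. real_common_multiple N L \<Longrightarrow> L0 \<le> L"
  shows "common_multiples N = range (\<lambda>j::int. of_int j * L0)"
proof -
  have L0_pos: "L0 > 0" and L0_cm: "L0 \<in> common_multiples N"
    using L0 by (simp_all add: real_common_multiple_iff)
  show ?thesis
  proof (intro equalityI subsetI)
    fix z assume z: "z \<in> common_multiples N"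
    define r where "r = z - of_int \<lfloor>z / L0\<rfloor> * L0"
    have r_cm: "r \<in> common_multiples N"
      unfolding r_def by (rule common_multiples_diff_mult[OF z L0_cm])
    have r: "0 \<le> r" "r < L0"
      using floor_divide_lower[OF L0_pos, of z] floor_divide_upper[OF L0_pos, of z]
      unfolding r_def by (simp_all add: algebra_simps)
    have "r = 0"
    proof (rule ccontr)
      assume "r \<noteq> 0"
      then have "real_common_multiple N r" using r r_cm by (simp add: real_common_multiple_iff)
      then show False using least r(2) by fastforce
    qed
    then show "z \<in> range (\<lambda>j::int. of_int j * L0)"
      unfolding r_def by (intro range_eqI[of _ _ "\<lfloor>z / L0\<rfloor>"]) simp
  next
    fix z assume "z \<in> range (\<lambda>j::int. of_int j * L0)"
    then obtain j :: int where j: "z = of_int j * L0" by blast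
    have "0 \<in> common_multiples N" unfolding common_multiples_def by (auto intro!: exI[of _ 0])
    from common_multiples_diff_mult[OF this L0_cm, of "- j"]
    show "z \<in> common_multiples N" by (simp add: j)
  qed
qed

lemma Inter_mult_set_eq:
  assumes N: "N \<noteq> {}" "\<forall>x\<in>N. x > 0" and c: "c > 0" and \<Delta>: "\<Delta> \<ge> 0"
  shows "(\<Inter>x\<in>N. mult_set (c * x) \<Delta>) = {z. 0 \<le> z \<and> z \<le> \<Delta> \<and> z / c \<in> common_multiples N}"
proof -
  have "(\<exists>n::int. z = of_int n * (c * x)) \<longleftrightarrow> (\<exists>n::int. z / c = of_int n * x)" for z x
    using c by (auto simp: field_simps)
  then show ?thesis
    using N c \<Delta> by (auto simp: mult_set_eq common_multiples_def)
qed

lemma tendsto_card_Inter_mult_set: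
  assumes N: "N \<noteq> {}" "\<forall>x\<in>N. x > 0" and c: "c > 0"
  shows "((\<lambda>\<Delta>. real (card (\<Inter>x\<in>N. mult_set (c * x) \<Delta>)) / \<Delta>) \<longlongrightarrow> inv_LCM N / c) at_top"
proof (cases "\<exists>L. real_common_multiple N L")
  case False
  then have "inv_LCM N = 0" by (simp add: inv_LCM_def real_LCM_def)
  have "z / c = 0" if "0 \<le> z" "z / c \<in> common_multiples N" for z
    using False that c unfolding real_common_multiple_iff by (metis divide_nonneg_pos order_le_less)
  moreover have "0 \<in> common_multiples N"
    unfolding common_multiples_def by (auto intro!: exI[of _ 0])
  ultimately have Inter_eq: "(\<Inter>x\<in>N. mult_set (c * x) \<Delta>) = {0}" if "\<Delta> \<ge> 0" for \<Delta>
    using Inter_mult_set_eq[OF N c that] c that by (auto simp: zero_le_divide_iff)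
  have "\<forall>\<^sub>F \<Delta> in at_top. 1 / \<Delta> = real (card (\<Inter>x\<in>N. mult_set (c * x) \<Delta>)) / \<Delta>"
    using eventually_ge_at_top[of 0] by eventually_elim (simp add: Inter_eq)
  moreover have "((\<lambda>\<Delta>::real. 1 / \<Delta>) \<longlongrightarrow> 0) at_top"
    using tendsto_inverse_0_at_top[OF filterlim_ident] by (simp add: inverse_eq_divide)
  ultimately show ?thesis
    using \<open>inv_LCM N = 0\<close> by (auto intro: Lim_transform_eventually)
next
  case True
  obtain x0 where x0: "x0 \<in> N" "x0 > 0" using N by auto
  obtain L0 where L0: "real_common_multiple N L0" "real_LCM N = ereal L0"
    and least: "\<And>L. real_common_multiple N L \<Longrightarrow> L0 \<le> L"
    using real_LCM_least[OF x0] True by blast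
  have L0_pos: "L0 > 0" using L0(1) by (simp add: real_common_multiple_iff)
  have CM: "common_multiples N = range (\<lambda>j::int. of_int j * L0)"
    by (rule common_multiples_eq_multiples[OF L0(1) least])
  have "z / c \<in> common_multiples N \<longleftrightarrow> (\<exists>j::int. z = of_int j * (c * L0))" for z
    unfolding CM image_iff using c by (auto simp: field_simps)
  then have Inter_eq: "(\<Inter>x\<in>N. mult_set (c * x) \<Delta>) = mult_set (c * L0) \<Delta>" if "\<Delta> \<ge> 0" for \<Delta>
    using c L0_pos that by (simp add: Inter_mult_set_eq[OF N c that] mult_set_eq)
  have "\<forall>\<^sub>F \<Delta> in at_top. real (card (mult_set (c * L0) \<Delta>)) / \<Delta>
      = real (card (\<Inter>x\<in>N. mult_set (c * x) \<Delta>)) / \<Delta>"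
    using eventually_ge_at_top[of 0] by eventually_elim (simp add: Inter_eq)
  moreover have "inv_LCM N / c = 1 / (c * L0)" by (simp add: inv_LCM_def L0(2))
  ultimately show ?thesis
    using tendsto_card_mult_set[of "c * L0"] c L0_pos by (auto intro: Lim_transform_eventually)
qed

lemma tendsto_card_Union_mult_set:
  assumes S: "finite S" "\<forall>x\<in>S. x > 0" and c: "c > 0"
  shows "((\<lambda>\<Delta>. real (card (\<Union>x\<in>S. mult_set (c * x) \<Delta>)) / \<Delta>) \<longlongrightarrow> incl_excl_sum S / c) at_top"
proof -
  define F where "F = {N. N \<subseteq> S \<and> N \<noteq> {}}"
  have incl_excl: "real (card (\<Union>x\<in>S. mult_set (c * x) \<Delta>)) / \<Delta>
      = (\<Sum>N\<in>F. (-1) ^ (card N + 1) * (real (card (\<Inter>x\<in>N. mult_set (c * x) \<Delta>)) / \<Delta>))"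
    if \<Delta>: "\<Delta> \<ge> 0" for \<Delta>
  proof -
    interpret Incl_Excl finite "int \<circ> card"
      by standard (auto simp: card_Un_disjnt)
    have "int (card (\<Union>x\<in>S. mult_set (c * x) \<Delta>))
        = (\<Sum>N\<in>F. (-1) ^ (card N + 1) * int (card (\<Inter>x\<in>N. mult_set (c * x) \<Delta>)))"
      using restricted_indexed[of S "\<lambda>x. mult_set (c * x) \<Delta>"] S c \<Delta>
      by (simp add: F_def finite_mult_set)
    from arg_cong[OF this, of real_of_int] show ?thesis by (simp add: sum_divide_distrib)
  qed
  have "((\<lambda>\<Delta>. \<Sum>N\<in>F. (-1) ^ (card N + 1) * (real (card (\<Inter>x\<in>N. mult_set (c * x) \<Delta>)) / \<Delta>))
      \<longlongrightarrow> (\<Sum>N\<in>F. (-1) ^ (card N + 1) * (inv_LCM N / c))) at_top"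
    by (intro tendsto_sum tendsto_mult_left tendsto_card_Inter_mult_set)
      (use S c in \<open>auto simp: F_def\<close>)
  moreover have "(\<Sum>N\<in>F. (-1) ^ (card N + 1) * (inv_LCM N / c)) = incl_excl_sum S / c"
    by (simp add: incl_excl_sum_def F_def sum_divide_distrib)
  moreover have "\<forall>\<^sub>F \<Delta> in at_top.
      (\<Sum>N\<in>F. (-1) ^ (card N + 1) * (real (card (\<Inter>x\<in>N. mult_set (c * x) \<Delta>)) / \<Delta>))
      = real (card (\<Union>x\<in>S. mult_set (c * x) \<Delta>)) / \<Delta>"
    using eventually_ge_at_top[of 0] by eventually_elim (simp add: incl_excl)
  ultimately show ?thesis by (auto intro: Lim_transform_eventually)
qed

lemma S_prim_eq_powr_image:
  assumes c: "0 \<le> c" "c < 1"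
  shows "S_prim m k (real m powr (c / real k))
       = (\<lambda>x. real m powr (x / real k)) ` (interleaved_ints c \<inter> {0..<real k})"
proof -
  have "S_prim m k (real m powr (c / real k))
      = (\<lambda>x. real m powr (x / real k)) ` (of_nat ` {..<k} \<union> (\<lambda>j. c + of_nat j) ` {..<k})"
    unfolding S_prim_def image_Un image_image
  proof (intro arg_cong2[where f = "(\<union>)"])
    have "{1..k} = Suc ` {..<k}" by (simp add: image_Suc_lessThan)
    then show "(\<lambda>\<kappa>. real m powr ((real \<kappa> - 1) / real k)) ` {1..k}
        = (\<lambda>j. real m powr (real j / real k)) ` {..<k}"
      "(\<lambda>\<kappa>. real m powr (c / real k) * real m powr ((real \<kappa> - 1) / real k)) ` {1..k}
        = (\<lambda>j. real m powr ((c + real j) / real k)) ` {..<k}"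
      by (simp_all add: image_image add_divide_distrib powr_add)
  qed
  also have "of_nat ` {..<k} \<union> (\<lambda>j. c + of_nat j) ` {..<k} = interleaved_ints c \<inter> {0..<real k}"
  proof (intro equalityI subsetI)
    fix x assume "x \<in> of_nat ` {..<k} \<union> (\<lambda>j. c + of_nat j) ` {..<k}"
    then show "x \<in> interleaved_ints c \<inter> {0..<real k}"
      using c by (auto simp: interleaved_ints_def)
  next
    fix x assume x: "x \<in> interleaved_ints c \<inter> {0..<real k}"
    then consider n where "x = of_int n" | n where "x = c + of_int n"
      unfolding interleaved_ints_def by (auto elim!: Ints_cases simp: diff_eq_eq)
    then show "x \<in> of_nat ` {..<k} \<union> (\<lambda>j. c + of_nat j) ` {..<k}"
    proof cases
      case 1
      then show ?thesis using x by (auto simp: image_iff intro!: bexI[of _ "nat n"])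
    next
      case 2
      then have "0 \<le> n" "n < int k" using x c by auto
      then show ?thesis using 2 by (auto simp: image_iff intro!: bexI[of _ "nat n"])
    qed
  qed
  finally show ?thesis .
qed

lemma S_sec_eq_S_prim: "S_sec m k \<alpha> = S_prim m k (real m powr (1 / real k) / \<alpha>)"
proof -
  have "real m powr (real \<kappa> / real k)
      = real m powr (1 / real k) * real m powr ((real \<kappa> - 1) / real k)" for \<kappa>
    by (simp add: powr_add[symmetric] diff_divide_distrib)
  then show ?thesis unfolding S_sec_def S_prim_def by simp
qed

lemma UN_mult_set_powr_exponents:
  fixes Z :: "real set"
  assumes m: "m \<ge> 1" and k: "k \<ge> 1" and g: "g > 0" and \<Delta>: "\<Delta> \<ge> 0"
    and Z: "\<And>x n. n \<in> \<int> \<Longrightarrow> x + n \<in> Z \<longleftrightarrow> x \<in> Z"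
  shows "(\<Union>x \<in> Z \<inter> {0..}. mult_set (g * real m powr (x / real k)) \<Delta>)
       = (\<Union>x \<in> Z \<inter> {0..<real k}. mult_set (g * real m powr (x / real k)) \<Delta>)"
proof (intro equalityI UN_least)
  fix x assume x: "x \<in> Z \<inter> {0..}"
  \<comment> \<open>reduce the exponent modulo \<open>k\<close>: the grid point is \<open>m ^ q\<close> times one in the first period\<close>
  define q where "q = \<lfloor>x / real k\<rfloor>"
  define x' where "x' = x - real k * of_int q"
  have "q \<ge> 0" using x k by (simp add: q_def)
  have "x' \<in> Z" using x Z[of "- (real k * of_int q)" x] by (simp add: x'_def)
  moreover have "x' \<in> {0..<real k}"
    using k floor_divide_lower[of "real k" x] floor_divide_upper[of "real k" x]
    by (simp add: x'_def q_def algebra_simps)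
  moreover have "mult_set (g * real m powr (x / real k)) \<Delta>
      \<subseteq> mult_set (g * real m powr (x' / real k)) \<Delta>"
  proof -
    have "real m powr (x / real k) = real (m ^ nat q) * real m powr (x' / real k)"
      using m k \<open>q \<ge> 0\<close> by (simp add: x'_def diff_divide_distrib powr_diff powr_realpow[symmetric])
    moreover have "m ^ nat q \<ge> 1" using m by simp
    ultimately show ?thesis
      using mult_set_mult_subset[of "g * real m powr (x' / real k)" \<Delta> "m ^ nat q"] m g \<Delta>
      by (simp add: mult.left_commute)
  qed
  ultimately show "mult_set (g * real m powr (x / real k)) \<Delta>
      \<subseteq> (\<Union>x \<in> Z \<inter> {0..<real k}. mult_set (g * real m powr (x / real k)) \<Delta>)"
    by blast
qed auto

locale interleaved_grid =
  fixes m k :: nat and \<alpha> \<tau> :: real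
  assumes m_ge_2: "m \<ge> 2" and k_ge_1: "k \<ge> 1"
    and alpha_gt_1: "1 < \<alpha>" and alpha_less: "\<alpha> < real m powr (1 / real k)"
    and tau_pos: "\<tau> > 0"
begin

definition b :: real where
  "b = real k * log (real m) \<alpha>"

lemma m_powr_b: "real m powr (b / real k) = \<alpha>"
  using m_ge_2 k_ge_1 alpha_gt_1 by (simp add: b_def)

lemma b_gt_0: "b > 0"
  using m_ge_2 k_ge_1 alpha_gt_1 by (simp add: b_def)

lemma b_less_1: "b < 1"
proof -
  have "log (real m) \<alpha> < log (real m) (real m powr (1 / real k))"
    using m_ge_2 alpha_gt_1 alpha_less by (subst log_less_cancel_iff) auto
  then show ?thesis using m_ge_2 k_ge_1 by (simp add: b_def field_simps)
qed

lemma m_powr_eq_exp: "real m powr (x / real k) = exp (ln (real m) / real k * x)"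
  using m_ge_2 by (simp add: powr_def)

lemma exp_b: "exp (ln (real m) / real k * b) = \<alpha>"
  using m_powr_b by (simp add: m_powr_eq_exp)

lemma exp_1_minus_b: "exp (ln (real m) / real k * (1 - b)) = real m powr (1 / real k) / \<alpha>"
  using exp_b m_powr_eq_exp[of 1] by (simp add: right_diff_distrib exp_diff)

lemma m_powr_less_iff: "real m powr (x / real k) < real m powr (y / real k) \<longleftrightarrow> x < y"
  using m_ge_2 k_ge_1 by (simp add: divide_less_cancel)

lemma shifted_grid_eq:
  "shifted_grid m k \<alpha> \<theta> \<tau> = (\<lambda>x. \<tau> * real m powr ((\<theta> + x) / real k)) ` interleaved_ints b"
proof -
  define f where "f x = \<tau> * real m powr ((\<theta> + x) / real k)" for x
  have prim: "real m powr (\<theta> / real k) * (real m powr (x / real k) * \<tau>) = f x" for x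
    by (simp add: f_def add_divide_distrib powr_add)
  have sec: "real m powr (\<theta> / real k) * (\<alpha> * real m powr (x / real k) * \<tau>) = f (b + x)" for x
    using m_powr_b by (simp add: f_def add_divide_distrib powr_add)
  have "shifted_grid m k \<alpha> \<theta> \<tau> = f ` \<int> \<union> (\<lambda>x. f (b + x)) ` \<int>"
    unfolding shifted_grid_def prim_grid_def sec_grid_def Ints_def
    by (auto simp: prim sec image_iff) (metis prim sec)+
  also have "\<dots> = f ` interleaved_ints b"
    unfolding interleaved_ints_def by (force simp: image_iff diff_eq_eq)
  finally show ?thesis unfolding f_def .
qed

lemma next_grid_eq:
  assumes t: "t > 0"
  defines "u \<equiv> real k * log (real m) (t / \<tau>)"
  shows "next_grid m k \<alpha> \<theta> \<tau> t = t * real m powr ((next_above b (u - \<theta>) - (u - \<theta>)) / real k)"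
proof -
  define f where "f x = \<tau> * real m powr ((\<theta> + x) / real k)" for x
  have f_less: "f x < f y \<longleftrightarrow> x < y" for x y
    using tau_pos m_powr_less_iff[of "\<theta> + x" "\<theta> + y"] by (simp add: f_def)
  have t_eq: "t = f (u - \<theta>)"
    using t tau_pos m_ge_2 k_ge_1 by (simp add: f_def u_def)
  have "next_grid m k \<alpha> \<theta> \<tau> t = f (next_above b (u - \<theta>))"
    unfolding next_grid_def shifted_grid_eq f_def[symmetric]
  proof (rule Least_equality)
    show "f (next_above b (u - \<theta>)) \<in> f ` interleaved_ints b \<and> t < f (next_above b (u - \<theta>))"
      using next_above_mem less_next_above[OF b_less_1] by (simp add: t_eq f_less)
  next
    fix g assume "g \<in> f ` interleaved_ints b \<and> t < g"
    then obtain e where "e \<in> interleaved_ints b" "g = f e" "u - \<theta> < e"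
      by (auto simp: t_eq f_less)
    then show "f (next_above b (u - \<theta>)) \<le> g"
      using next_above_le[OF less_imp_le[OF b_gt_0] b_less_1] f_less by (meson not_le)
  qed
  also have "\<dots> = f (u - \<theta>) * real m powr ((next_above b (u - \<theta>) - (u - \<theta>)) / real k)"
    by (simp add: f_def powr_add[symmetric] add_divide_distrib[symmetric] add.commute)
  finally show ?thesis by (simp add: t_eq)
qed

lemma E_unif_next_grid:
  assumes t: "t > 0"
  shows "E_unif (\<lambda>\<theta>. next_grid m k \<alpha> \<theta> \<tau> t)
       = real k / ln (real m) * (\<alpha> + real m powr (1 / real k) / \<alpha> - 2) * t"
proof -
  define L where "L = ln (real m) / real k"
  define u where "u = real k * log (real m) (t / \<tau>)"
  have L: "L > 0" using m_ge_2 k_ge_1 by (simp add: L_def)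
  have "(\<lambda>\<theta>. next_grid m k \<alpha> \<theta> \<tau> t)
      = (\<lambda>\<theta>. t * exp (L * (next_above b (u - \<theta>) - (u - \<theta>))))"
    by (simp add: next_grid_eq[OF t] m_powr_eq_exp L_def u_def)
  then have "E_unif (\<lambda>\<theta>. next_grid m k \<alpha> \<theta> \<tau> t)
      = (t * (exp (L * (1 - b)) - 1) + t * (exp (L * b) - 1)) / L"
    using E_unif_exp_next_above[OF b_gt_0 b_less_1, of L u t t] L by simp
  also have "\<dots> = real k / ln (real m) * (\<alpha> + real m powr (1 / real k) / \<alpha> - 2) * t"
    using L unfolding L_def exp_b exp_1_minus_b by (simp add: field_simps)
  finally show ?thesis .
qed

lemma E_unif_inverse_next_grid:
  assumes t: "t > 0"
  shows "E_unif (\<lambda>\<theta>. 1 / next_grid m k \<alpha> \<theta> \<tau> t)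
       = real k / ln (real m) * (2 - 1 / \<alpha> - \<alpha> / real m powr (1 / real k)) * (1 / t)"
proof -
  define L where "L = ln (real m) / real k"
  define u where "u = real k * log (real m) (t / \<tau>)"
  have L: "L > 0" using m_ge_2 k_ge_1 by (simp add: L_def)
  have "(\<lambda>\<theta>. 1 / next_grid m k \<alpha> \<theta> \<tau> t)
      = (\<lambda>\<theta>. 1 / t * exp (- L * (next_above b (u - \<theta>) - (u - \<theta>))))"
    by (simp add: next_grid_eq[OF t] m_powr_eq_exp L_def u_def exp_minus field_simps)
  then have "E_unif (\<lambda>\<theta>. 1 / next_grid m k \<alpha> \<theta> \<tau> t)
      = (1 / t * (exp (- L * (1 - b)) - 1) + 1 / t * (exp (- L * b) - 1)) / - L"
    using E_unif_exp_next_above[OF b_gt_0 b_less_1, of "- L" u "1 / t" "1 / t"] L by simp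
  also have "\<dots> = real k / ln (real m) * (2 - 1 / \<alpha> - \<alpha> / real m powr (1 / real k)) * (1 / t)"
    using L alpha_gt_1 t m_ge_2 unfolding L_def mult_minus_left exp_minus exp_b exp_1_minus_b
    by (simp add: field_simps)
  finally show ?thesis .
qed

lemma shifted_grid_above_next_grid:
  fixes \<theta> :: real
  defines "g0 \<equiv> next_grid m k \<alpha> \<theta> \<tau> \<tau>"
  shows "shifted_grid m k \<alpha> \<theta> \<tau> \<inter> {g0..}
      = (\<lambda>x. g0 * real m powr (x / real k))
          ` (interleaved_ints (if b \<le> frac (- \<theta>) then b else 1 - b) \<inter> {0..})"
proof -
  define n0 where "n0 = next_above b (- \<theta>)"
  have g0: "g0 = \<tau> * real m powr ((\<theta> + n0) / real k)"
    using next_grid_eq[OF tau_pos, of \<theta>] tau_pos by (simp add: g0_def n0_def add.commute)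
  have "shifted_grid m k \<alpha> \<theta> \<tau>
      = (\<lambda>x. g0 * real m powr (x / real k)) ` ((\<lambda>x. x - n0) ` interleaved_ints b)"
    unfolding shifted_grid_eq image_image g0
    by (simp add: mult.assoc powr_add[symmetric] add_divide_distrib[symmetric])
  also have "\<dots> = (\<lambda>x. g0 * real m powr (x / real k))
      ` interleaved_ints (if b \<le> frac (- \<theta>) then b else 1 - b)"
    unfolding n0_def interleaved_ints_translate ..
  moreover have "g0 \<le> g0 * real m powr (x / real k) \<longleftrightarrow> 0 \<le> x" for x
    using m_powr_less_iff[of x 0] g0 tau_pos m_ge_2
    by (simp add: mult_le_cancel_left1 not_less[symmetric])
  ultimately show ?thesis by auto
qed

lemma density_coeff_eq:
  "density_coeff m k \<alpha> \<theta> \<tau>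
     = (if b \<le> frac (- \<theta>) then Sigma_prim m k \<alpha> else Sigma_sec m k \<alpha>) / next_grid m k \<alpha> \<theta> \<tau> \<tau>"
proof -
  define g0 where "g0 = next_grid m k \<alpha> \<theta> \<tau> \<tau>"
  define c where "c = (if b \<le> frac (- \<theta>) then b else 1 - b)"
  define S where "S = S_prim m k (real m powr (c / real k))"
  have c: "0 \<le> c" "c < 1" using b_gt_0 b_less_1 by (auto simp: c_def)
  have g0_pos: "g0 > 0"
    using next_grid_eq[OF tau_pos, of \<theta>] tau_pos m_ge_2 by (simp add: g0_def)
  have S_eq: "(if b \<le> frac (- \<theta>) then S_prim m k \<alpha> else S_sec m k \<alpha>) = S"
    using m_ge_2 by (simp add: S_def c_def m_powr_b S_sec_eq_S_prim diff_divide_distrib powr_diff)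
  have grid: "shifted_grid m k \<alpha> \<theta> \<tau> \<inter> {g0..}
      = (\<lambda>x. g0 * real m powr (x / real k)) ` (interleaved_ints c \<inter> {0..})"
    unfolding g0_def c_def by (rule shifted_grid_above_next_grid)
  have union: "(\<Union>g \<in> shifted_grid m k \<alpha> \<theta> \<tau> \<inter> {g0..}. mult_set g \<Delta>)
      = (\<Union>s\<in>S. mult_set (g0 * s) \<Delta>)" if "\<Delta> \<ge> 0" for \<Delta>
    using UN_mult_set_powr_exponents[of m k g0 \<Delta> "interleaved_ints c"] m_ge_2 k_ge_1 g0_pos that
    unfolding grid S_def S_prim_eq_powr_image[OF c]
    by (simp add: interleaved_ints_add_int image_image)
  have "finite S" "\<forall>s\<in>S. s > 0"
    using m_ge_2 unfolding S_def S_prim_def by auto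
  then have "((\<lambda>\<Delta>. real (card (\<Union>s\<in>S. mult_set (g0 * s) \<Delta>)) / \<Delta>)
      \<longlongrightarrow> incl_excl_sum S / g0) at_top"
    using g0_pos by (rule tendsto_card_Union_mult_set)
  moreover have "\<forall>\<^sub>F \<Delta> in at_top. real (card (\<Union>s\<in>S. mult_set (g0 * s) \<Delta>)) / \<Delta>
      = real (card (\<Union>g \<in> shifted_grid m k \<alpha> \<theta> \<tau> \<inter> {g0..}. mult_set g \<Delta>)) / \<Delta>"
    using eventually_ge_at_top[of 0] by eventually_elim (simp add: union)
  ultimately have "((\<lambda>\<Delta>. real (card (\<Union>g \<in> shifted_grid m k \<alpha> \<theta> \<tau> \<inter> {g0..}. mult_set g \<Delta>)) / \<Delta>)
      \<longlongrightarrow> incl_excl_sum S / g0) at_top"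
    by (rule Lim_transform_eventually)
  then have "density_coeff m k \<alpha> \<theta> \<tau> = incl_excl_sum S / g0"
    unfolding density_coeff_def g0_def by (rule tendsto_Lim[rotated]) simp
  then show ?thesis
    unfolding S_eq[symmetric] g0_def Sigma_prim_def Sigma_sec_def by simp
qed

lemma E_unif_density_coeff:
  "E_unif (\<lambda>\<theta>. density_coeff m k \<alpha> \<theta> \<tau>)
     = real k / ln (real m)
       * ((1 - \<alpha> / real m powr (1 / real k)) * Sigma_prim m k \<alpha>
          + (1 - 1 / \<alpha>) * Sigma_sec m k \<alpha>) * (1 / \<tau>)"
proof -
  define L where "L = ln (real m) / real k"
  define P where "P = Sigma_prim m k \<alpha> / \<tau>"
  define Q where "Q = Sigma_sec m k \<alpha> / \<tau>"
  have L: "L > 0" using m_ge_2 k_ge_1 by (simp add: L_def)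
  have "density_coeff m k \<alpha> \<theta> \<tau>
      = (if b \<le> frac (0 - \<theta>) then P else Q) * exp (- L * (next_above b (0 - \<theta>) - (0 - \<theta>)))" for \<theta>
    using tau_pos by (cases "b \<le> frac (- \<theta>)")
      (simp_all add: density_coeff_eq next_grid_eq m_powr_eq_exp L_def P_def Q_def exp_minus
        field_simps)
  then have "E_unif (\<lambda>\<theta>. density_coeff m k \<alpha> \<theta> \<tau>)
      = (P * (exp (- L * (1 - b)) - 1) + Q * (exp (- L * b) - 1)) / - L"
    using E_unif_exp_next_above[OF b_gt_0 b_less_1, of "- L" 0 P Q] L by simp
  also have "\<dots> = real k / ln (real m)
       * ((1 - \<alpha> / real m powr (1 / real k)) * Sigma_prim m k \<alpha>
          + (1 - 1 / \<alpha>) * Sigma_sec m k \<alpha>) * (1 / \<tau>)"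
    using L alpha_gt_1 tau_pos m_ge_2
    unfolding L_def P_def Q_def mult_minus_left exp_minus exp_b exp_1_minus_b
    by (simp add: field_simps)
  finally show ?thesis .
qed

end

theorem claim4p1:
  fixes m k :: nat and \<alpha> \<tau> :: real
  assumes "m \<ge> 2" and "k \<ge> 1"
    and "1 < \<alpha>" and "\<alpha> < real m powr (1 / real k)"
    and "\<tau> > 0"
  shows "(\<forall>t > 0. E_unif (\<lambda>\<theta>. next_grid m k \<alpha> \<theta> \<tau> t)
             = real k / ln (real m) * (\<alpha> + real m powr (1 / real k) / \<alpha> - 2) * t)
       \<and> (\<forall>t > 0. E_unif (\<lambda>\<theta>. 1 / next_grid m k \<alpha> \<theta> \<tau> t)
             = real k / ln (real m) * (2 - 1 / \<alpha> - \<alpha> / real m powr (1 / real k)) * (1 / t))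
       \<and> E_unif (\<lambda>\<theta>. density_coeff m k \<alpha> \<theta> \<tau>)
             = real k / ln (real m)
               * ((1 - \<alpha> / real m powr (1 / real k)) * Sigma_prim m k \<alpha>
                  + (1 - 1 / \<alpha>) * Sigma_sec m k \<alpha>) * (1 / \<tau>)"
proof -
  interpret interleaved_grid m k \<alpha> \<tau>
    using assms by unfold_locales
  show ?thesis
    using E_unif_next_grid E_unif_inverse_next_grid E_unif_density_coeff by blast
qed

end
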